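(* Let $V$ be a vertex algebra and $M$ a subspace of $V$ with $\mathcal{D}(V)\subseteq M$. Then for $u\in V$, $u\in lsr_{0,-1}(M)$ if and only if $u\in rsr_{0,-1}(M)$. In particular $lsr_{0,-1}(M)=rsr_{0,-1}(M)=sr_{0,-1}(M)$.
   Context: A vertex algebra $(V,Y,\mathbf{1})$ is over $\mathbb{C}$; for $u\in V$ write $Y(u,z)=\sum_{n\in\mathbb{Z}}u_nz^{-n-1}$ with $u_n\in\operatorname{End}V$. $\mathcal{D}$ is the linear operator $\mathcal{D}(v)=v_{-2}\mathbf{1}$. Iterated products are nested to the right: $v_{n_1}\cdots v_{n_t}v=v_{n_1}(\cdots(v_{n_t}v))$. For a subspace $M\subseteq V$: $lsr_{0,-1}(M)$ is the set of $v\in V$ such that for every $b\in V$ there is $m\ge0$ with $b_sv_{n_1}\cdots v_{n_t}v\in M$ for all $t\ge m$ and all $s,n_1,\dots,n_t\in\{0,-1\}$. $rsr_{0,-1}(M)$ is the set of $v\in V$ such that for every $w\in V$ there is $m\ge 0$ with $(v_{n_1}\cdots v_{n_t}v)_nw\in M$ for all $t\ge m$ and all $n,n_1,\dots,n_t\in\{0,-1\}$. $sr_{0,-1}(M)=lsr_{0,-1}(M)\cap rsr_{0,-1}(M)$. *)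

theory Defs
  imports Complex_Main "HOL-Library.Groups_Big_Fun"
begin

text \<open>A vertex algebra over the complex numbers, given by its modes:
  mode u n v stands for u_n v, where Y(u,z) = sum_n u_n z^(-n-1),
  and one is the vacuum vector. Sums over i in the Borcherds identity are finitely
  supported by truncation and are expressed with Sum_any.\<close>

definition vertex_algebra :: "(complex \<Rightarrow> 'v::ab_group_add \<Rightarrow> 'v) \<Rightarrow> ('v \<Rightarrow> int \<Rightarrow> 'v \<Rightarrow> 'v) \<Rightarrow> 'v \<Rightarrow> bool" where
  "vertex_algebra smul mode one \<longleftrightarrow>
     vector_space smul \<and>
     (\<forall>u n. Vector_Spaces.linear smul smul (mode u n)) \<and>
     (\<forall>n v. Vector_Spaces.linear smul smul (\<lambda>u. mode u n v)) \<and>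
     (\<forall>u v. \<exists>N. \<forall>n\<ge>N. mode u n v = 0) \<and>
     (\<forall>n v. mode one n v = (if n = -1 then v else 0)) \<and>
     (\<forall>u. mode u (-1) one = u) \<and>
     (\<forall>u n. n \<ge> 0 \<longrightarrow> mode u n one = 0) \<and>
     (\<forall>u v w (p::int) (q::int) (r::int).
        (\<Sum>i::nat. smul ((of_int p :: complex) gchoose i) (mode (mode u (r + int i) v) (p + q - int i) w))
        = (\<Sum>i::nat. smul ((-1::complex) ^ i * ((of_int r :: complex) gchoose i))
              (mode u (p + r - int i) (mode v (q + int i) w)
               - smul ((-1::complex) powi r) (mode v (q + r - int i) (mode u (p + int i) w)))))"

definition VD :: "('v \<Rightarrow> int \<Rightarrow> 'v \<Rightarrow> 'v) \<Rightarrow> 'v \<Rightarrow> 'v \<Rightarrow> 'v" where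
  "VD mode one v = mode v (-2) one"

definition iprod :: "('v \<Rightarrow> int \<Rightarrow> 'v \<Rightarrow> 'v) \<Rightarrow> 'v \<Rightarrow> int list \<Rightarrow> 'v \<Rightarrow> 'v" where
  "iprod mode v ns x = foldr (\<lambda>n y. mode v n y) ns x"

definition lsr :: "('v \<Rightarrow> int \<Rightarrow> 'v \<Rightarrow> 'v) \<Rightarrow> 'v set \<Rightarrow> 'v set" where
  "lsr mode M = {v. \<forall>b. \<exists>m::nat. \<forall>s ns. length ns \<ge> m \<longrightarrow> s \<in> {0, -1} \<longrightarrow> set ns \<subseteq> {0, -1}
       \<longrightarrow> mode b s (iprod mode v ns v) \<in> M}"

definition rsr :: "('v \<Rightarrow> int \<Rightarrow> 'v \<Rightarrow> 'v) \<Rightarrow> 'v set \<Rightarrow> 'v set" where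
  "rsr mode M = {v. \<forall>w. \<exists>m::nat. \<forall>n ns. length ns \<ge> m \<longrightarrow> n \<in> {0, -1} \<longrightarrow> set ns \<subseteq> {0, -1}
       \<longrightarrow> mode (iprod mode v ns v) n w \<in> M}"

definition sr :: "('v \<Rightarrow> int \<Rightarrow> 'v \<Rightarrow> 'v) \<Rightarrow> 'v set \<Rightarrow> 'v set" where
  "sr mode M = lsr mode M \<inter> rsr mode M"

end

theory Submission
  imports Defs
begin

text \<open>The Borcherds identity with w = 1 and p = q = -1 expresses
  x_{r-1} y - (-1)^r y_{r-1} x as a combination of vectors z_{-k} 1 with k \<ge> 2,
  and with u = x, v = w = 1 it gives D(x_{-k+1} 1) = (k - 1) x_{-k} 1. So once
  D(V) \<subseteq> M, every such z_{-k} 1 lies in M, hence x_n y \<in> M iff y_n x \<in> M for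
  every n. The defining conditions of lsr and rsr differ exactly by such a swap.\<close>

lemma Sum_any_eq_single:
  assumes "\<And>i. i \<noteq> a \<Longrightarrow> f i = (0 :: 'a::comm_monoid_add)"
  shows "Sum_any f = f a"
proof -
  have "f = (\<lambda>i. if i = a then f i else 0)"
    using assms by auto
  then show ?thesis
    by (metis Sum_any.delta)
qed

context vector_space
begin

lemma subspace_Sum_any:
  assumes "subspace S" "\<And>i. f i \<in> S"
  shows "Sum_any f \<in> S"
  unfolding Sum_any.expand_set using assms by (simp add: subspace_sum)

lemma subspace_scale_iff:
  assumes "subspace S" "c \<noteq> 0"
  shows "c *s x \<in> S \<longleftrightarrow> x \<in> S"
  using assms subspace_scale[of S "c *s x" "inverse c"] subspace_scale by auto

lemma subspace_mem_iff_if_diff_scale: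
  assumes S: "subspace S" and diff: "x - c *s y \<in> S" and "c \<noteq> 0"
  shows "x \<in> S \<longleftrightarrow> y \<in> S"
proof -
  have "x \<in> S \<longleftrightarrow> c *s y \<in> S"
  proof
    assume "x \<in> S"
    then show "c *s y \<in> S"
      using subspace_diff[OF S _ diff] by fastforce
  next
    assume "c *s y \<in> S"
    then show "x \<in> S"
      using subspace_add[OF S diff] by fastforce
  qed
  with assms show ?thesis
    by (simp add: subspace_scale_iff)
qed

end

locale vertex_alg =
  fixes smul :: "complex \<Rightarrow> 'v::ab_group_add \<Rightarrow> 'v"
    and mode :: "'v \<Rightarrow> int \<Rightarrow> 'v \<Rightarrow> 'v" and one :: 'v
  assumes vertex_algebra: "vertex_algebra smul mode one"
begin

sublocale vector_space smul
  using vertex_algebra by (simp add: vertex_algebra_def)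

lemma mode_zero_right [simp]: "mode u n 0 = 0"
proof -
  interpret vector_space_pair smul smul ..
  show ?thesis
    using vertex_algebra by (simp add: vertex_algebra_def linear_0)
qed

lemma vacuum_mode [simp]: "mode one n v = (if n = -1 then v else 0)"
  using vertex_algebra by (simp add: vertex_algebra_def)

lemma creation [simp]: "mode u (-1) one = u"
  using vertex_algebra by (simp add: vertex_algebra_def)

lemma annihilation [simp]: "n \<ge> 0 \<Longrightarrow> mode u n one = 0"
  using vertex_algebra by (simp add: vertex_algebra_def)

lemma borcherds:
  "(\<Sum>i::nat. smul (of_int p gchoose i) (mode (mode u (r + int i) v) (p + q - int i) w))
   = (\<Sum>i::nat. smul ((-1) ^ i * (of_int r gchoose i))
        (mode u (p + r - int i) (mode v (q + int i) w)
         - smul ((-1) powi r) (mode v (q + r - int i) (mode u (p + int i) w))))"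
  using vertex_algebra unfolding vertex_algebra_def by blast

lemma VD_mode_vacuum: "VD mode one (mode x r one) = smul (- of_int r) (mode x (r - 1) one)"
proof -
  have "VD mode one (mode x r one)
      = (\<Sum>i::nat. smul (of_int 0 gchoose i) (mode (mode x (r + int i) one) (0 + -2 - int i) one))"
    by (subst Sum_any_eq_single[where a = 0]) (auto simp: VD_def gbinomial_0_left)
  also have "\<dots> = (\<Sum>i::nat. smul ((-1) ^ i * (of_int r gchoose i))
        (mode x (0 + r - int i) (mode one (-2 + int i) one)
         - smul ((-1) powi r) (mode one (-2 + r - int i) (mode x (0 + int i) one))))"
    by (rule borcherds)
  also have "\<dots> = smul (- of_int r) (mode x (r - 1) one)"
    by (subst Sum_any_eq_single[where a = 1]) auto
  finally show ?thesis .
qed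

lemma skew_symmetry_vacuum_expansion:
  "mode x (r - 1) y - smul ((-1) powi r) (mode y (r - 1) x)
   = (\<Sum>i::nat. smul (of_int (-1) gchoose i) (mode (mode x (r + int i) y) (- 2 - int i) one))"
proof -
  have "mode x (r - 1) y - smul ((-1) powi r) (mode y (r - 1) x)
      = (\<Sum>i::nat. smul ((-1) ^ i * (of_int r gchoose i))
        (mode x (-1 + r - int i) (mode y (-1 + int i) one)
         - smul ((-1) powi r) (mode y (-1 + r - int i) (mode x (-1 + int i) one))))"
    by (subst Sum_any_eq_single[where a = 0]) auto
  also have "\<dots> = (\<Sum>i::nat. smul (of_int (-1) gchoose i)
        (mode (mode x (r + int i) y) (-1 + -1 - int i) one))"
    by (rule borcherds[symmetric])
  finally show ?thesis
    by simp
qed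

context
  fixes M :: "'v set"
  assumes M: "subspace M" and VD_mem: "\<And>v. VD mode one v \<in> M"
begin

lemma mode_vacuum_mem:
  assumes "k \<le> -2"
  shows "mode x k one \<in> M"
proof -
  have "smul (- of_int (k + 1)) (mode x k one) \<in> M"
    using VD_mem[of "mode x (k + 1) one"] by (simp add: VD_mode_vacuum)
  moreover have "- of_int (k + 1) \<noteq> (0 :: complex)"
    unfolding neg_equal_0_iff_equal of_int_eq_0_iff using assms by simp
  ultimately show ?thesis
    using subspace_scale_iff[OF M] by blast
qed

lemma skew_symmetry_mem: "mode x (r - 1) y - smul ((-1) powi r) (mode y (r - 1) x) \<in> M"
  unfolding skew_symmetry_vacuum_expansion
  by (intro subspace_Sum_any[OF M] subspace_scale[OF M] mode_vacuum_mem) simp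

lemma mode_mem_commute: "mode x n y \<in> M \<longleftrightarrow> mode y n x \<in> M"
  using subspace_mem_iff_if_diff_scale[OF M skew_symmetry_mem[of x "n + 1" y]] by simp

end

end

lemma lsr_eq_rsr_if_mode_mem_commute:
  assumes "\<And>x y n. mode x n y \<in> M \<longleftrightarrow> mode y n x \<in> M"
  shows "lsr mode M = rsr mode M"
  unfolding lsr_def rsr_def using assms by simp

theorem mainTheorem3:
  fixes smul :: "complex \<Rightarrow> 'v::ab_group_add \<Rightarrow> 'v"
    and mode :: "'v \<Rightarrow> int \<Rightarrow> 'v \<Rightarrow> 'v" and one :: 'v
    and M :: "'v set" and u :: 'v
  assumes "vertex_algebra smul mode one"
    and "module.subspace smul M"
    and "\<forall>v. VD mode one v \<in> M"
  shows "(u \<in> lsr mode M \<longleftrightarrow> u \<in> rsr mode M) \<and> lsr mode M = rsr mode M \<and> rsr mode M = sr mode M"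
proof -
  interpret vertex_alg smul mode one
    using assms(1) by unfold_locales
  have "lsr mode M = rsr mode M"
    by (rule lsr_eq_rsr_if_mode_mem_commute, rule mode_mem_commute)
      (use assms(2,3) in auto)
  then show ?thesis
    unfolding sr_def by simp
qed

end
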